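(* For unrestricted (arbitrary nonnegative) valuation functions in one-sided matching with $n$ agents and $n$ items, every deterministic matching algorithm that makes at most $k\ge1$ value queries per agent has distortion $\Omega\!\left(\frac1k n^{1/k}\right)$. This holds even on instances in which all agents have the same ranking of the items.
   Context: One-sided matching: there is a set $N$ of $n$ agents and a set $A$ of $n$ items. Each agent $i$ has a valuation function $v_i:A\to\mathbb{R}_{\ge0}$. A deterministic matching algorithm making $k$ queries per agent receives the profile of strict rankings $\succ_i$ consistent with the values (if $a\succ_i b$ then $v_i(a)\ge v_i(b)$). It adaptively makes value queries $(i,j)\mapsto v_i(j)$, at most $k$ per agent, and outputs a bijection $Y:N\to A$. Its distortion is the supremum over valuation profiles of $\max_Z\sum_i v_i(z_i)/\sum_i v_i(y_i)$. *)

theory Defs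
  imports "HOL-Analysis.Analysis"
begin

text \<open>Agents and items are both indexed by 0..<n.
  A valuation profile is v :: nat => nat => real, v i j = value of agent i for item j.
  A ranking profile is rho :: nat => nat => nat, where rho i r is the item that agent i
  ranks at position r (position 0 = most preferred).\<close>

text \<open>An adaptive deterministic query algorithm (after seeing the rankings) is a decision
  tree: either output a matching, or query the value v i j and continue depending on the
  answer.\<close>

datatype qtree = Output "nat \<Rightarrow> nat" | Query nat nat "real \<Rightarrow> qtree"

primrec run :: "qtree \<Rightarrow> (nat \<Rightarrow> nat \<Rightarrow> real) \<Rightarrow> nat \<Rightarrow> nat" where
  "run (Output Y) v = Y"
| "run (Query i j f) v = run (f (v i j)) v"

primrec trace :: "qtree \<Rightarrow> (nat \<Rightarrow> nat \<Rightarrow> real) \<Rightarrow> (nat \<times> nat) list" where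
  "trace (Output Y) v = []"
| "trace (Query i j f) v = (i, j) # trace (f (v i j)) v"

definition is_matching :: "nat \<Rightarrow> (nat \<Rightarrow> nat) \<Rightarrow> bool" where
  "is_matching n Y \<longleftrightarrow> bij_betw Y {..<n} {..<n}"

definition is_ranking_profile :: "nat \<Rightarrow> (nat \<Rightarrow> nat \<Rightarrow> nat) \<Rightarrow> bool" where
  "is_ranking_profile n \<rho> \<longleftrightarrow> (\<forall>i<n. bij_betw (\<rho> i) {..<n} {..<n})"

definition valid_instance :: "nat \<Rightarrow> (nat \<Rightarrow> nat \<Rightarrow> nat) \<Rightarrow> (nat \<Rightarrow> nat \<Rightarrow> real) \<Rightarrow> bool" where
  "valid_instance n \<rho> v \<longleftrightarrow> is_ranking_profile n \<rho>
     \<and> (\<forall>i<n. \<forall>j<n. 0 \<le> v i j)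
     \<and> (\<forall>i<n. \<forall>r s. r < s \<and> s < n \<longrightarrow> v i (\<rho> i s) \<le> v i (\<rho> i r))"

definition same_ranking :: "nat \<Rightarrow> (nat \<Rightarrow> nat \<Rightarrow> nat) \<Rightarrow> bool" where
  "same_ranking n \<rho> \<longleftrightarrow> (\<forall>i<n. \<forall>r<n. \<rho> i r = \<rho> 0 r)"

definition welfare :: "nat \<Rightarrow> (nat \<Rightarrow> nat \<Rightarrow> real) \<Rightarrow> (nat \<Rightarrow> nat) \<Rightarrow> real" where
  "welfare n v Y = (\<Sum>i<n. v i (Y i))"

definition opt_welfare :: "nat \<Rightarrow> (nat \<Rightarrow> nat \<Rightarrow> real) \<Rightarrow> real" where
  "opt_welfare n v = Max {welfare n v Z | Z. is_matching n Z}"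

text \<open>An algorithm maps the ranking profile to a decision tree.\<close>
definition k_query_algorithm ::
  "nat \<Rightarrow> nat \<Rightarrow> ((nat \<Rightarrow> nat \<Rightarrow> nat) \<Rightarrow> qtree) \<Rightarrow> bool" where
  "k_query_algorithm n k A \<longleftrightarrow>
     (\<forall>\<rho> v. valid_instance n \<rho> v \<longrightarrow>
        (\<forall>(i, j) \<in> set (trace (A \<rho>) v). i < n \<and> j < n)
      \<and> (\<forall>i<n. length (filter (\<lambda>q. fst q = i) (trace (A \<rho>) v)) \<le> k)
      \<and> is_matching n (run (A \<rho>) v))"

definition ratio :: "nat \<Rightarrow> (nat \<Rightarrow> nat \<Rightarrow> real) \<Rightarrow> (nat \<Rightarrow> nat) \<Rightarrow> ereal" where
  "ratio n v Y = (if welfare n v Y > 0 then ereal (opt_welfare n v / welfare n v Y)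
                  else if opt_welfare n v > 0 then \<infinity> else 1)"

definition distortion_on ::
  "((nat \<Rightarrow> nat \<Rightarrow> nat) \<Rightarrow> bool) \<Rightarrow> nat \<Rightarrow> ((nat \<Rightarrow> nat \<Rightarrow> nat) \<Rightarrow> qtree) \<Rightarrow> ereal" where
  "distortion_on P n A =
     (SUP x \<in> {(\<rho>, v). valid_instance n \<rho> v \<and> P \<rho>}. ratio n (snd x) (run (A (fst x)) (snd x)))"

end

theory Submission
  imports Defs "HOL-Library.Log_Nat"
begin

(* All agents rank the items 0, 1, 2, ... in this order. Under the base profile every agent
   values the items with d base-L digits at L^-d (for d < k) and the remaining items at 1/n;
   the total value of all items, hence the welfare of any matching, is at most k + 1.
   Once the algorithm has committed to its matching Y on the base profile, the adversary raises
   each agent's values on the items ranked above Y i as far as the answered queries and the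
   common ranking allow, capped at L; the algorithm sees the same answers and still outputs Y.
   At least (k + 1) L^k agents hold tail items, and each of them queried at most k of the k + 1
   zones, so L^k of them missed a common zone t. Their values on zone t (or on the item just
   above their own, when t = k) are then at least L^-(t-1), and matching them there gives
   welfare about L - 1. With L about (n/(k+2))^(1/k) the ratio is of order n^(1/k)/k. *)

section \<open>Welfare and distortion\<close>

lemma run_cong_trace:
  assumes "\<forall>(i, j) \<in> set (trace t v). w i j = v i j"
  shows "run t w = run t v"
  using assms by (induction t) auto

lemma matching_extend:
  assumes "B \<subseteq> {..<n}" "inj_on h B" "h ` B \<subseteq> {..<n}"
  obtains Z where "is_matching n Z" "\<forall>i\<in>B. Z i = h i"
proof -
  have "finite B" using assms(1) finite_subset by blast
  then have "card ({..<n} - B) = card ({..<n} - h ` B)"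
    using assms by (simp add: card_Diff_subset card_image)
  then obtain g where g: "bij_betw g ({..<n} - B) ({..<n} - h ` B)"
    by (metis finite_Diff finite_lessThan finite_same_card_bij)
  have "bij_betw (\<lambda>x. if x \<in> B then h x else g x) (B \<union> ({..<n} - B)) (h ` B \<union> ({..<n} - h ` B))"
    using assms(2) g by (intro bij_betw_disjoint_Un) (auto simp: bij_betw_imageI)
  moreover have "B \<union> ({..<n} - B) = {..<n}" "h ` B \<union> ({..<n} - h ` B) = {..<n}"
    using assms by auto
  ultimately show ?thesis
    by (intro that[of "\<lambda>x. if x \<in> B then h x else g x"]) (auto simp: is_matching_def)
qed

lemma finite_matching_welfares: "finite {welfare n v Z |Z. is_matching n Z}"
proof (rule finite_subset)
  show "{welfare n v Z |Z. is_matching n Z} \<subseteq> (\<lambda>Z. welfare n v Z) ` ({..<n} \<rightarrow>\<^sub>E {..<n})"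
  proof
    fix x assume "x \<in> {welfare n v Z |Z. is_matching n Z}"
    then obtain Z where Z: "is_matching n Z" "x = welfare n v Z" by auto
    then have "restrict Z {..<n} \<in> {..<n} \<rightarrow>\<^sub>E {..<n}" "welfare n v (restrict Z {..<n}) = x"
      by (auto simp: is_matching_def bij_betw_def welfare_def)
    then show "x \<in> (\<lambda>Z. welfare n v Z) ` ({..<n} \<rightarrow>\<^sub>E {..<n})" by force
  qed
qed (simp add: finite_PiE)

lemma welfare_le_opt_welfare:
  assumes "is_matching n Z"
  shows "welfare n v Z \<le> opt_welfare n v"
  unfolding opt_welfare_def using assms finite_matching_welfares by (intro Max_ge) auto

lemma opt_welfare_ge_card_mult:
  assumes "B \<subseteq> {..<n}" "inj_on h B" "h ` B \<subseteq> {..<n}"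
    and nonneg: "\<forall>i<n. \<forall>j<n. 0 \<le> v i j" and "\<forall>i\<in>B. c \<le> v i (h i)"
  shows "real (card B) * c \<le> opt_welfare n v"
proof -
  obtain Z where Z: "is_matching n Z" "\<forall>i\<in>B. Z i = h i"
    using matching_extend[OF assms(1-3)] by blast
  have "\<forall>i<n. Z i < n"
    using Z(1) by (auto simp: is_matching_def bij_betw_def)
  then have "real (card B) * c \<le> (\<Sum>i\<in>B. v i (Z i))"
    using assms(5) Z(2) sum_mono[of B "\<lambda>_. c" "\<lambda>i. v i (Z i)"] by simp
  also have "\<dots> \<le> (\<Sum>i<n. v i (Z i))"
    using assms(1) nonneg \<open>\<forall>i<n. Z i < n\<close> by (intro sum_mono2) auto
  also have "\<dots> \<le> opt_welfare n v"
    using welfare_le_opt_welfare[OF Z(1)] by (simp add: welfare_def)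
  finally show ?thesis .
qed

lemma ratio_ge_one:
  assumes "is_matching n Y"
  shows "1 \<le> ratio n v Y"
  using welfare_le_opt_welfare[OF assms, of v] by (auto simp: ratio_def)

lemma ratio_le_distortion_on:
  assumes "valid_instance n \<rho> v" "P \<rho>"
  shows "ratio n v (run (A \<rho>) v) \<le> distortion_on P n A"
  unfolding distortion_on_def by (rule SUP_upper2[of "(\<rho>, v)"]) (use assms in auto)

lemma same_ranking_identity: "same_ranking n (\<lambda>i r. r)"
  by (simp add: same_ranking_def)

lemma valid_instance_identity_iff:
  "valid_instance n (\<lambda>i r. r) v \<longleftrightarrow>
     (\<forall>i<n. \<forall>j<n. 0 \<le> v i j) \<and> (\<forall>i<n. \<forall>r s. r < s \<and> s < n \<longrightarrow> v i s \<le> v i r)"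
  by (simp add: valid_instance_def is_ranking_profile_def bij_betw_id[unfolded id_def])

lemma distortion_on_ge_one:
  assumes "k_query_algorithm n k A"
  shows "1 \<le> distortion_on (same_ranking n) n A"
proof -
  have valid: "valid_instance n (\<lambda>i r. r) (\<lambda>i j. 0)"
    by (simp add: valid_instance_identity_iff)
  then have "is_matching n (run (A (\<lambda>i r. r)) (\<lambda>i j. 0))"
    using assms by (simp add: k_query_algorithm_def)
  then show ?thesis
    using ratio_le_distortion_on[of n "\<lambda>i r. r" "\<lambda>i j. 0" "same_ranking n" A,
        OF valid same_ranking_identity] ratio_ge_one order_trans
    by blast
qed

section \<open>Adversarial valuations\<close>

(* The largest nonincreasing function bounded by c that agrees with an antitone f on Q. *)
definition envelope :: "real \<Rightarrow> (nat \<Rightarrow> real) \<Rightarrow> nat set \<Rightarrow> nat \<Rightarrow> real" where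
  "envelope c f Q j = Min (insert c (f ` {q \<in> Q. q \<le> j}))"

lemma envelope_geI:
  assumes "finite Q" "d \<le> c" "\<forall>q\<in>Q. q \<le> j \<longrightarrow> d \<le> f q"
  shows "d \<le> envelope c f Q j"
  using assms by (auto simp: envelope_def Min_ge_iff)

lemma envelope_ge:
  assumes "finite Q" "antimono f" "f j \<le> c"
  shows "f j \<le> envelope c f Q j"
  using assms by (intro envelope_geI) (auto dest: antimonoD)

lemma envelope_eq:
  assumes "finite Q" "antimono f" "f j \<le> c" "j \<in> Q"
  shows "envelope c f Q j = f j"
proof (rule antisym)
  show "envelope c f Q j \<le> f j"
    unfolding envelope_def using assms by (intro Min_le) auto
qed (rule envelope_ge[OF assms(1-3)])

lemma antimono_envelope:
  assumes "finite Q"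
  shows "antimono (envelope c f Q)"
  using assms by (intro antimonoI) (auto simp: envelope_def intro!: Min_antimono)

definition adversary ::
  "real \<Rightarrow> (nat \<Rightarrow> real) \<Rightarrow> (nat \<Rightarrow> nat set) \<Rightarrow> (nat \<Rightarrow> nat) \<Rightarrow> nat \<Rightarrow> nat \<Rightarrow> real" where
  "adversary c f Q Y i j = (if j < Y i then envelope c f (Q i) j else f j)"

definition queried :: "(nat \<times> nat) list \<Rightarrow> nat \<Rightarrow> nat set" where
  "queried T i = {j. (i, j) \<in> set T}"

lemma finite_queried: "finite (queried T i)"
  by (rule finite_subset[of _ "snd ` set T"]) (force simp: queried_def)+

lemma card_queried_le:
  assumes "length (filter (\<lambda>q. fst q = i) T) \<le> k"
  shows "card (queried T i) \<le> k"
proof -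
  have "queried T i = snd ` set (filter (\<lambda>q. fst q = i) T)"
    by (force simp: queried_def)
  then have "card (queried T i) \<le> length (filter (\<lambda>q. fst q = i) T)"
    by (metis card_image_le card_length finite_set order_trans)
  then show ?thesis using assms by linarith
qed

lemma run_adversary:
  assumes "antimono f" "\<forall>j. f j \<le> c"
  shows "run t (adversary c f (queried (trace t (\<lambda>i. f))) (run t (\<lambda>i. f))) = run t (\<lambda>i. f)"
proof (rule run_cong_trace, clarify)
  fix i j assume "(i, j) \<in> set (trace t (\<lambda>i. f))"
  then have "j \<in> queried (trace t (\<lambda>i. f)) i"
    by (simp add: queried_def)
  then show "adversary c f (queried (trace t (\<lambda>i. f))) (run t (\<lambda>i. f)) i j = f j"
    using assms by (simp add: adversary_def envelope_eq finite_queried)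
qed

lemma adversary_ge:
  assumes "\<forall>i. finite (Q i)" "antimono f" "\<forall>j. f j \<le> c"
  shows "f j \<le> adversary c f Q Y i j"
  using assms envelope_ge by (simp add: adversary_def)

lemma valid_instance_adversary:
  assumes "\<forall>i. finite (Q i)" "antimono f" "\<forall>j. f j \<le> c" "\<forall>j. 0 \<le> f j"
  shows "valid_instance n (\<lambda>i r. r) (adversary c f Q Y)"
  unfolding valid_instance_identity_iff
proof (intro conjI allI impI)
  fix i j show "0 \<le> adversary c f Q Y i j"
    using adversary_ge[OF assms(1-3)] assms(4) order_trans by blast
next
  fix i r s :: nat assume "r < s \<and> s < n"
  then have "r \<le> s" by simp
  have env_anti: "envelope c f (Q i) s \<le> envelope c f (Q i) r"
    using antimono_envelope[of "Q i" c f] assms(1) \<open>r \<le> s\<close> by (simp add: antimonoD)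
  have f_anti: "f s \<le> f r"
    using assms(2) \<open>r \<le> s\<close> by (simp add: antimonoD)
  have "f r \<le> envelope c f (Q i) r"
    using assms by (simp add: envelope_ge)
  then show "adversary c f Q Y i s \<le> adversary c f Q Y i r"
    using env_anti f_anti \<open>r \<le> s\<close> by (auto simp: adversary_def)
qed

lemma welfare_adversary:
  assumes "is_matching n Y"
  shows "welfare n (adversary c f Q Y) Y = (\<Sum>j<n. f j)"
proof -
  have "welfare n (adversary c f Q Y) Y = (\<Sum>i<n. f (Y i))"
    by (simp add: welfare_def adversary_def)
  also have "\<dots> = (\<Sum>j<n. f j)"
    using assms unfolding is_matching_def by (rule sum.reindex_bij_betw)
  finally show ?thesis .
qed

section \<open>Level valuations\<close>

lemma sum_inverse_power_floorlog_le:
  assumes "1 < L"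
  shows "(\<Sum>j<L^m. 1 / real L ^ floorlog L j) \<le> real m + 1"
proof (induction m)
  case 0
  then show ?case by (simp add: floorlog_def)
next
  case (Suc m)
  have le: "L^m \<le> L^Suc m" using assms by simp
  have "(\<Sum>j\<in>{L^m..<L^Suc m}. 1 / real L ^ floorlog L j) = (\<Sum>j\<in>{L^m..<L^Suc m}. 1 / real L ^ Suc m)"
  proof (rule sum.cong)
    fix j assume "j \<in> {L^m..<L^Suc m}"
    then have "floorlog L j = Suc m"
      using floorlog_ge_SucI[of L m j] floorlog_leI[of j L "Suc m"] assms by auto
    then show "1 / real L ^ floorlog L j = 1 / real L ^ Suc m" by simp
  qed simp
  also have "\<dots> = real (L^Suc m - L^m) / real L ^ Suc m" by simp
  also have "\<dots> \<le> 1" using assms le by (simp add: of_nat_diff)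
  finally have "(\<Sum>j\<in>{L^m..<L^Suc m}. 1 / real L ^ floorlog L j) \<le> 1" .
  moreover have "(\<Sum>j<L^Suc m. 1 / real L ^ floorlog L j) =
      (\<Sum>j<L^m. 1 / real L ^ floorlog L j) + (\<Sum>j\<in>{L^m..<L^Suc m}. 1 / real L ^ floorlog L j)"
    unfolding lessThan_atLeast0 using le by (intro sum.atLeastLessThan_concat[symmetric]) auto
  ultimately show ?case using Suc by simp
qed

(* floorlog L j is the number of base-L digits of j. *)
definition level_value :: "nat \<Rightarrow> nat \<Rightarrow> nat \<Rightarrow> nat \<Rightarrow> real" where
  "level_value n L k j = (if j < L^(k-1) then 1 / real L ^ floorlog L j else 1 / real n)"

lemma level_value_pos: "1 < L \<Longrightarrow> 1 \<le> n \<Longrightarrow> 0 < level_value n L k j"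
  by (simp add: level_value_def)

lemma level_value_le_one: "1 < L \<Longrightarrow> 1 \<le> n \<Longrightarrow> level_value n L k j \<le> 1"
  by (simp add: level_value_def)

lemma level_value_ge:
  assumes "1 < L" "q < L^m" "m \<le> k - 1"
  shows "1 / real L ^ m \<le> level_value n L k q"
proof -
  have "q < L^(k-1)"
    using assms power_increasing[OF assms(3), of L] by linarith
  moreover have "real L ^ floorlog L q \<le> real L ^ m"
    using assms floorlog_leI[of q L m] by (intro power_increasing) auto
  ultimately show ?thesis
    using assms(1) by (auto simp: level_value_def intro!: frac_le)
qed

lemma antimono_level_value:
  assumes "1 < L" "L^(k-1) \<le> n"
  shows "antimono (level_value n L k)"
proof (rule antimonoI)
  fix i j :: nat assume "i \<le> j"
  show "level_value n L k j \<le> level_value n L k i"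
  proof (cases "i < L^(k-1)")
    case True
    then have "L ^ floorlog L i \<le> n"
      using assms floorlog_leI[of i L "k-1"] power_increasing[of "floorlog L i" "k-1" L]
      by linarith
    then have "real L ^ floorlog L i \<le> real n"
      by (metis of_nat_le_iff of_nat_power)
    moreover have "real L ^ floorlog L i \<le> real L ^ floorlog L j"
      using floorlog_mono[OF \<open>i \<le> j\<close>] assms(1) by (intro power_increasing) auto
    ultimately show ?thesis
      using True assms(1) by (auto simp: level_value_def intro!: frac_le)
  next
    case False
    then show ?thesis using \<open>i \<le> j\<close> by (simp add: level_value_def)
  qed
qed

lemma sum_level_value_le:
  assumes "1 < L" "1 \<le> k" "L^(k-1) \<le> n"
  shows "(\<Sum>j<n. level_value n L k j) \<le> real k + 1"
proof -
  have "(\<Sum>j<n. level_value n L k j) =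
      (\<Sum>j<L^(k-1). level_value n L k j) + (\<Sum>j\<in>{L^(k-1)..<n}. level_value n L k j)"
    unfolding lessThan_atLeast0 using assms(3) by (intro sum.atLeastLessThan_concat[symmetric]) auto
  moreover have "(\<Sum>j<L^(k-1). level_value n L k j) \<le> real k"
    using sum_inverse_power_floorlog_le[OF assms(1), of "k-1"] assms(2)
    by (simp add: level_value_def of_nat_diff)
  moreover have "(\<Sum>j\<in>{L^(k-1)..<n}. level_value n L k j) \<le> 1"
    by (simp add: level_value_def of_nat_diff divide_le_eq)
  ultimately show ?thesis by linarith
qed

section \<open>Agents missing a zone\<close>

lemma exists_card_ge_of_cover:
  assumes "finite I" "I \<noteq> {}" "\<forall>t\<in>I. finite (M t)" "S \<subseteq> (\<Union>t\<in>I. M t)"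
    and "card I * m \<le> card S"
  shows "\<exists>t\<in>I. m \<le> card (M t)"
proof (rule ccontr)
  assume "\<not> ?thesis"
  then have small: "\<forall>t\<in>I. card (M t) < m" by auto
  have "card S \<le> card (\<Union>t\<in>I. M t)"
    using assms(1,3,4) by (intro card_mono) auto
  also have "\<dots> \<le> (\<Sum>t\<in>I. card (M t))"
    by (rule card_UN_le[OF assms(1)])
  also have "\<dots> < (\<Sum>t\<in>I. m)"
    using assms(1,2) small by (intro sum_strict_mono) auto
  finally show False using assms(5) by simp
qed

locale level_base =
  fixes n k L :: nat
  assumes k_pos: "1 \<le> k" and L_ge_2: "2 \<le> L" and n_ge: "(k + 2) * L^k \<le> n"
begin

lemma L_gt_1: "1 < L"
  using L_ge_2 by simp

lemma power_k_minus_1_le_power_k: "L^(k-1) \<le> L^k"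
  using L_gt_1 by (intro power_increasing) auto

lemma power_k_le_n: "L^k \<le> n"
proof -
  have "L^k \<le> (k + 2) * L^k" by simp
  then show ?thesis using n_ge by linarith
qed

lemma n_pos: "1 \<le> n"
proof -
  have "1 \<le> L^k" using L_gt_1 by simp
  then show ?thesis using power_k_le_n by linarith
qed

lemma level_value_antimono: "antimono (level_value n L k)"
  using antimono_level_value[OF L_gt_1] power_k_minus_1_le_power_k power_k_le_n by simp

lemma level_value_le_L: "level_value n L k j \<le> real L"
  using level_value_le_one[OF L_gt_1 n_pos, of k j] L_gt_1 by simp

end

locale hard_instance = level_base +
  fixes Q :: "nat \<Rightarrow> nat set" and Y :: "nat \<Rightarrow> nat"
  assumes matching: "is_matching n Y"
    and finite_queries: "finite (Q i)" and card_queries: "i < n \<Longrightarrow> card (Q i) \<le> k"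
begin

abbreviation v :: "nat \<Rightarrow> nat \<Rightarrow> real" where
  "v \<equiv> adversary (real L) (level_value n L k) Q Y"

(* Zone t < k is the set of items with t digits; zone k collects all items from L^(k-1) on. *)
definition zone :: "nat \<Rightarrow> nat" where
  "zone j = min k (floorlog L j)"

definition tail_agents :: "nat set" where
  "tail_agents = {i. i < n \<and> L^(k-1) \<le> Y i}"

definition agents_missing :: "nat \<Rightarrow> nat set" where
  "agents_missing t = {i \<in> tail_agents. \<forall>q\<in>Q i. zone q \<noteq> t}"

lemma agents_missing_subset: "agents_missing t \<subseteq> {..<n}"
  by (auto simp: agents_missing_def tail_agents_def)

lemma adversary_nonneg: "0 \<le> v i j"
proof -
  have "level_value n L k j \<le> v i j"
    using finite_queries level_value_antimono level_value_le_L by (intro adversary_ge) auto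
  then show ?thesis
    using level_value_pos[OF L_gt_1 n_pos, of k j] by linarith
qed

lemma zone_le: "zone j \<le> k"
  by (simp add: zone_def)

lemma zone_eq_0_iff: "zone j = 0 \<longleftrightarrow> j = 0"
  using k_pos L_gt_1 floorlog_eq_zero_iff[of L j] by (auto simp: zone_def)

lemma zone_mono: "i \<le> j \<Longrightarrow> zone i \<le> zone j"
  unfolding zone_def by (intro min.mono order_refl floorlog_mono)

lemma zone_le_if_less_power: "j < L^t \<Longrightarrow> zone j \<le> t"
  using floorlog_leI[of j L t] L_gt_1 by (auto simp: zone_def)

lemma less_power_if_zone_less: "zone q < t \<Longrightarrow> t \<le> k \<Longrightarrow> q < L^(t-1)"
  using floorlog_leD[of L q "t-1"] L_gt_1 by (auto simp: zone_def)

lemma adversary_ge_if_zone_missed: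
  assumes "i \<in> agents_missing t" "1 \<le> t" "t \<le> k" "j < Y i" "zone j \<le> t"
  shows "1 / real L ^ (t-1) \<le> v i j"
proof -
  have "1 / real L ^ (t-1) \<le> envelope (real L) (level_value n L k) (Q i) j"
  proof (rule envelope_geI[OF finite_queries])
    have "1 / real L ^ (t-1) \<le> 1" using L_gt_1 by simp
    then show "1 / real L ^ (t-1) \<le> real L" using L_gt_1 by linarith
    show "\<forall>q\<in>Q i. q \<le> j \<longrightarrow> 1 / real L ^ (t-1) \<le> level_value n L k q"
    proof (intro ballI impI)
      fix q assume "q \<in> Q i" "q \<le> j"
      then have "zone q < t"
        using assms(1,5) zone_mono[of q j] by (fastforce simp: agents_missing_def)
      then show "1 / real L ^ (t-1) \<le> level_value n L k q"
        using less_power_if_zone_less assms(3) L_gt_1 by (intro level_value_ge) auto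
    qed
  qed
  then show ?thesis using assms(4) by (simp add: adversary_def)
qed

lemma inj_on_matching: "inj_on Y {..<n}"
  using matching by (simp add: is_matching_def bij_betw_def)

lemma card_tail_agents: "card tail_agents = n - L^(k-1)"
proof -
  have "Y ` tail_agents = {L^(k-1)..<n}"
  proof
    show "Y ` tail_agents \<subseteq> {L^(k-1)..<n}"
      using matching bij_betw_apply by (fastforce simp: tail_agents_def is_matching_def)
    show "{L^(k-1)..<n} \<subseteq> Y ` tail_agents"
    proof
      fix j assume j: "j \<in> {L^(k-1)..<n}"
      then have "j \<in> Y ` {..<n}"
        using matching by (auto simp: is_matching_def bij_betw_def)
      then obtain i where "i < n" "j = Y i" by auto
      then show "j \<in> Y ` tail_agents" using j by (auto simp: tail_agents_def)
    qed
  qed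
  moreover have "inj_on Y tail_agents"
    using inj_on_matching by (rule inj_on_subset) (auto simp: tail_agents_def)
  ultimately show ?thesis by (metis card_atLeastLessThan card_image)
qed

lemma exists_missed_zone: "\<exists>t\<le>k. L^k \<le> card (agents_missing t)"
proof -
  have "tail_agents \<subseteq> (\<Union>t\<in>{..k}. agents_missing t)"
  proof
    fix i assume i: "i \<in> tail_agents"
    have "card (zone ` Q i) \<le> k"
      using card_image_le[OF finite_queries] card_queries i le_trans
      by (fastforce simp: tail_agents_def)
    then have "zone ` Q i \<noteq> {..k}" by auto
    moreover have "zone ` Q i \<subseteq> {..k}" using zone_le by auto
    ultimately obtain t where "t \<le> k" "t \<notin> zone ` Q i" by auto
    then show "i \<in> (\<Union>t\<in>{..k}. agents_missing t)" using i by (force simp: agents_missing_def)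
  qed
  moreover have "card {..k} * L^k \<le> card tail_agents"
    using card_tail_agents n_ge power_k_minus_1_le_power_k by simp
  moreover have "finite (agents_missing t)" for t
    by (rule finite_subset[of _ "{..<n}"]) (auto simp: agents_missing_def tail_agents_def)
  ultimately show ?thesis
    using exists_card_ge_of_cover[of "{..k}" agents_missing tail_agents "L^k"] by auto
qed

lemma opt_welfare_ge_if_first_zone_missed:
  assumes "agents_missing 0 \<noteq> {}"
  shows "real L \<le> opt_welfare n v"
proof -
  obtain i where i: "i \<in> agents_missing 0" using assms by blast
  have "1 \<le> L^(k-1)" using L_gt_1 by simp
  then have "i < n" "0 < Y i" "0 \<notin> Q i"
    using i zone_eq_0_iff by (auto simp: agents_missing_def tail_agents_def)
  then have no_query: "{q \<in> Q i. q \<le> 0} = {}" by auto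
  have "v i 0 = real L"
    using \<open>0 < Y i\<close> unfolding adversary_def envelope_def no_query by simp
  then have "real (card {i}) * real L \<le> opt_welfare n v"
    using \<open>i < n\<close> adversary_nonneg by (intro opt_welfare_ge_card_mult[of _ _ "\<lambda>_. 0"]) auto
  then show ?thesis by simp
qed

lemma opt_welfare_ge_if_middle_zone_missed:
  assumes "1 \<le> t" "t < k" "L^k \<le> card (agents_missing t)"
  shows "real L - 1 \<le> opt_welfare n v"
proof -
  define B where "B = {L^(t-1)..<L^t}"
  have Lt: "L^t \<le> L^(k-1)"
    using assms L_gt_1 by (intro power_increasing) auto
  have card_B: "card B = L^t - L^(t-1)"
    by (simp add: B_def)
  then have "card B \<le> card (agents_missing t)"
    using Lt power_k_minus_1_le_power_k assms(3) by linarith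
  then obtain M where M: "M \<subseteq> agents_missing t" "card M = card B" "finite M"
    by (meson obtain_subset_with_card_n)
  then obtain h where h: "bij_betw h M B"
    using finite_same_card_bij[of M B] by (auto simp: B_def)
  have "real (card M) * (1 / real L ^ (t-1)) \<le> opt_welfare n v"
  proof (rule opt_welfare_ge_card_mult)
    show "M \<subseteq> {..<n}" using M(1) agents_missing_subset by blast
    show "inj_on h M" using h by (simp add: bij_betw_def)
    have "B \<subseteq> {..<n}"
      using Lt power_k_minus_1_le_power_k power_k_le_n by (auto simp: B_def)
    then show "h ` M \<subseteq> {..<n}" using h by (simp add: bij_betw_def)
    show "\<forall>i<n. \<forall>j<n. 0 \<le> v i j" using adversary_nonneg by blast
    show "\<forall>i\<in>M. 1 / real L ^ (t-1) \<le> v i (h i)"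
    proof
      fix i assume "i \<in> M"
      then have "i \<in> agents_missing t" "h i < L^t"
        using M(1) bij_betw_apply[OF h] by (auto simp: B_def)
      moreover from this have "h i < Y i"
        using Lt by (auto simp: agents_missing_def tail_agents_def)
      ultimately show "1 / real L ^ (t-1) \<le> v i (h i)"
        using assms zone_le_if_less_power by (intro adversary_ge_if_zone_missed) auto
    qed
  qed
  moreover have "real (card M) * (1 / real L ^ (t-1)) = real L - 1"
  proof -
    obtain s where s: "t = Suc s" using assms(1) by (cases t) auto
    have "L^s \<le> L^t" using s L_gt_1 by simp
    then have "real (card M) = real L * real L ^ s - real L ^ s"
      using M(2) card_B s by (simp add: of_nat_diff)
    then show ?thesis using s L_gt_1 by (simp add: field_simps)
  qed
  ultimately show ?thesis by simp
qed

lemma card_matched_to_le_one: "card {i \<in> {..<n}. Y i = j} \<le> 1"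
  using inj_on_matching by (auto simp: card_le_Suc0_iff_eq inj_on_def)

lemma opt_welfare_ge_if_last_zone_missed:
  assumes "L^k \<le> card (agents_missing k)"
  shows "real L - 1 \<le> opt_welfare n v"
proof -
  \<comment> \<open>at most one agent holds item L^(k-1); all others can move to the item just above their own\<close>
  define M where "M = {i \<in> agents_missing k. L^(k-1) < Y i}"
  have "agents_missing k \<subseteq> M \<union> {i \<in> {..<n}. Y i = L^(k-1)}"
    by (auto simp: M_def agents_missing_def tail_agents_def)
  moreover have "finite M"
    using agents_missing_subset by (auto simp: M_def intro: finite_subset)
  ultimately have "card (agents_missing k) \<le> card (M \<union> {i \<in> {..<n}. Y i = L^(k-1)})"
    by (intro card_mono) auto
  also have "\<dots> \<le> card M + card {i \<in> {..<n}. Y i = L^(k-1)}"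
    by (rule card_Un_le)
  finally have "card (agents_missing k) \<le> card M + card {i \<in> {..<n}. Y i = L^(k-1)}" .
  then have card_M: "L^k - 1 \<le> card M"
    using assms card_matched_to_le_one[of "L^(k-1)"] by linarith
  have "real (card M) * (1 / real L ^ (k-1)) \<le> opt_welfare n v"
  proof (rule opt_welfare_ge_card_mult)
    have "M \<subseteq> {..<n}" using agents_missing_subset by (auto simp: M_def)
    then show "M \<subseteq> {..<n}" .
    show "inj_on (\<lambda>i. Y i - 1) M"
    proof (rule inj_onI)
      fix a b assume ab: "a \<in> M" "b \<in> M" "Y a - 1 = Y b - 1"
      then have "0 < Y a" "0 < Y b" by (auto simp: M_def)
      then have "Y a = Y b" using ab(3) by linarith
      then show "a = b"
        using inj_onD[OF inj_on_matching] ab(1,2) \<open>M \<subseteq> {..<n}\<close> by blast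
    qed
    have "\<forall>i<n. Y i < n"
      using matching by (auto simp: is_matching_def bij_betw_def)
    then show "(\<lambda>i. Y i - 1) ` M \<subseteq> {..<n}"
      using \<open>M \<subseteq> {..<n}\<close> by fastforce
    show "\<forall>i<n. \<forall>j<n. 0 \<le> v i j" using adversary_nonneg by blast
    show "\<forall>i\<in>M. 1 / real L ^ (k-1) \<le> v i (Y i - 1)"
    proof
      fix i assume "i \<in> M"
      then have "i \<in> agents_missing k" "Y i - 1 < Y i" by (auto simp: M_def)
      then show "1 / real L ^ (k-1) \<le> v i (Y i - 1)"
        using k_pos zone_le by (intro adversary_ge_if_zone_missed) auto
    qed
  qed
  moreover have "real L - 1 \<le> real (card M) * (1 / real L ^ (k-1))"
  proof -
    obtain s where s: "k = Suc s" using k_pos by (cases k) auto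
    have "real L ^ k - 1 \<le> real (card M)"
      using card_M one_le_power[of L k] L_gt_1 by (simp add: of_nat_diff flip: of_nat_power)
    then have "(real L ^ k - 1) / real L ^ s \<le> real (card M) / real L ^ s"
      using L_gt_1 by (intro divide_right_mono) auto
    moreover have "(real L ^ k - 1) / real L ^ s = real L - 1 / real L ^ s"
      using s L_gt_1 by (simp add: field_simps)
    moreover have "1 / real L ^ s \<le> 1" using L_gt_1 by simp
    ultimately show ?thesis using s by simp
  qed
  ultimately show ?thesis by simp
qed

lemma opt_welfare_adversary_ge: "real L - 1 \<le> opt_welfare n v"
proof -
  obtain t where t: "t \<le> k" "L^k \<le> card (agents_missing t)"
    using exists_missed_zone by blast
  consider "t = 0" | "1 \<le> t" "t < k" | "t = k" using t(1) by linarith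
  then show ?thesis
  proof cases
    case 1
    then have "agents_missing 0 \<noteq> {}"
      using t(2) one_le_power[of L k] L_gt_1 by auto
    then show ?thesis using opt_welfare_ge_if_first_zone_missed by simp
  qed (use t opt_welfare_ge_if_middle_zone_missed opt_welfare_ge_if_last_zone_missed in auto)
qed

end

lemma distortion_on_ge_level_base:
  assumes "level_base n k L" and alg: "k_query_algorithm n k A"
  shows "ereal ((real L - 1) / (real k + 1)) \<le> distortion_on (same_ranking n) n A"
proof -
  interpret level_base n k L by (fact assms(1))
  define \<rho> :: "nat \<Rightarrow> nat \<Rightarrow> nat" where "\<rho> = (\<lambda>i r. r)"
  define f where "f = level_value n L k"
  define T where "T = trace (A \<rho>) (\<lambda>i. f)"
  define Y where "Y = run (A \<rho>) (\<lambda>i. f)"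
  have f_props: "antimono f" "\<forall>j. f j \<le> real L" "\<forall>j. 0 \<le> f j"
    using level_value_antimono level_value_le_L level_value_pos[OF L_gt_1 n_pos]
    by (auto simp: f_def less_imp_le)
  have "valid_instance n \<rho> (\<lambda>i. f)"
    using f_props by (auto simp: \<rho>_def valid_instance_identity_iff antimonoD)
  then have "\<forall>i<n. length (filter (\<lambda>q. fst q = i) T) \<le> k" "is_matching n Y"
    using alg by (auto simp: k_query_algorithm_def T_def Y_def)
  then interpret hard_instance n k L "queried T" Y
    by unfold_locales (auto simp: finite_queried card_queried_le)
  have run: "run (A \<rho>) v = Y"
    using run_adversary[OF f_props(1,2)] by (simp add: T_def Y_def f_def)
  have valid: "valid_instance n \<rho> v"
    unfolding \<rho>_def f_def[symmetric] using f_props finite_queried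
    by (intro valid_instance_adversary) auto
  have welfare: "welfare n v Y = (\<Sum>j<n. f j)"
    unfolding f_def by (rule welfare_adversary[OF matching])
  have "0 < welfare n v Y"
    unfolding welfare using n_pos level_value_pos[OF L_gt_1 n_pos]
    by (intro sum_pos) (auto simp: f_def lessThan_empty_iff)
  moreover have "welfare n v Y \<le> real k + 1"
    unfolding welfare f_def
    using sum_level_value_le[OF L_gt_1 k_pos] power_k_minus_1_le_power_k power_k_le_n by simp
  ultimately have "(real L - 1) / (real k + 1) \<le> opt_welfare n v / welfare n v Y"
    using opt_welfare_adversary_ge L_gt_1 by (intro frac_le) auto
  then have "ereal ((real L - 1) / (real k + 1)) \<le> ratio n v (run (A \<rho>) v)"
    using \<open>0 < welfare n v Y\<close> by (simp add: run ratio_def)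
  also have "\<dots> \<le> distortion_on (same_ranking n) n A"
    using valid same_ranking_identity by (intro ratio_le_distortion_on) (auto simp: \<rho>_def)
  finally show ?thesis .
qed

lemma k_plus_2_powr_inverse_le_3:
  assumes "1 \<le> k"
  shows "(real k + 2) powr (1 / real k) \<le> 3"
proof -
  have "real k + 2 \<le> 1 + real k * 2"
    using assms by simp
  also have "\<dots> \<le> (1 + 2) ^ k"
    by (rule Bernoulli_inequality) simp
  finally have "real k + 2 \<le> 3 ^ k" by simp
  then have "(real k + 2) powr (1 / real k) \<le> (3 ^ k) powr (1 / real k)"
    by (intro powr_mono2) auto
  also have "\<dots> = 3"
    using assms by (simp add: powr_realpow[symmetric] powr_powr)
  finally show ?thesis .
qed

lemma exists_level_base:
  assumes "1 \<le> k" "6 \<le> real n powr (1 / real k)"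
  obtains L where "level_base n k L" "real n powr (1 / real k) \<le> 12 * (real L - 1)"
proof -
  define y where "y = (real n / (real k + 2)) powr (1 / real k)"
  have "0 < n"
    using assms(2) by (cases n) auto
  have "real n powr (1 / real k) = y * (real k + 2) powr (1 / real k)"
    by (simp add: y_def powr_divide)
  also have "\<dots> \<le> y * 3"
    using k_plus_2_powr_inverse_le_3[OF assms(1)] by (intro mult_left_mono) (auto simp: y_def)
  finally have x_le: "real n powr (1 / real k) \<le> 3 * y" by simp
  define L where "L = nat \<lfloor>y\<rfloor>"
  have "2 \<le> y" using x_le assms(2) by linarith
  moreover have "real L = of_int \<lfloor>y\<rfloor>"
    using \<open>2 \<le> y\<close> by (simp add: L_def)
  ultimately have L: "2 \<le> real L" "real L \<le> y" "y < real L + 1"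
    using floor_correct[of y] by auto
  then have "2 \<le> L" by simp
  have "real L ^ k \<le> y ^ k"
    using L by (intro power_mono) auto
  also have "y ^ k = real n / (real k + 2)"
    using assms(1) \<open>0 < n\<close> by (simp add: y_def powr_power)
  finally have "real ((k + 2) * L^k) \<le> real n"
    by (simp add: field_simps)
  then have "level_base n k L"
    using assms(1) \<open>2 \<le> L\<close> by unfold_locales (simp_all only: of_nat_le_iff)
  moreover have "real n powr (1 / real k) \<le> 12 * (real L - 1)"
    using x_le L by argo
  ultimately show ?thesis by (rule that)
qed

theorem theorem5:
  shows "\<exists>c>0. \<forall>n k A. 1 \<le> n \<longrightarrow> 1 \<le> k \<longrightarrow> k_query_algorithm n k A \<longrightarrow>
           ereal (c * real n powr (1 / real k) / real k) \<le> distortion_on (same_ranking n) n A"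
proof (intro exI[of _ "1/24"] conjI allI impI)
  fix n k A assume "1 \<le> n" and k: "1 \<le> k" and alg: "k_query_algorithm n k A"
  let ?x = "real n powr (1 / real k)"
  show "ereal (1/24 * ?x / real k) \<le> distortion_on (same_ranking n) n A"
  proof (cases "6 \<le> ?x")
    case True
    then obtain L where L: "level_base n k L" "?x \<le> 12 * (real L - 1)"
      using exists_level_base[OF k] by blast
    have "?x * (real k + 1) \<le> 12 * (real L - 1) * (real k + 1)"
      using L(2) by (intro mult_right_mono) auto
    also have "\<dots> \<le> 12 * (real L - 1) * (2 * real k)"
      using L(2) True k by (intro mult_left_mono) auto
    finally have "ereal (1/24 * ?x / real k) \<le> ereal ((real L - 1) / (real k + 1))"
      using k by (simp add: field_simps)
    also have "\<dots> \<le> distortion_on (same_ranking n) n A"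
      by (rule distortion_on_ge_level_base[OF L(1) alg])
    finally show ?thesis .
  next
    case False
    then have "ereal (1/24 * ?x / real k) \<le> 1"
      using k by (simp add: field_simps)
    also have "\<dots> \<le> distortion_on (same_ranking n) n A"
      by (rule distortion_on_ge_one[OF alg])
    finally show ?thesis .
  qed
qed simp

end
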